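(* Let $D^*$ be an absolutely continuous real random variable with cumulative distribution function $F(q)=\Pr\{D^*\le q\}$ and probability density function $f(q)=dF(q)/dq$, and assume $F$ is strictly increasing and continuous. Let $c>0$, $P>0$ and $q_0\ge 0$, and consider the one-round problem $$\min_{q_1}\; c(q_1-q_0)+P\bigl(1-F(q_1)\bigr)\qquad\text{subject to } q_0\le q_1 .$$ If there exist $\tilde q> q_0$ and $\hat\epsilon\ge 0$ such that $$\frac{c}{P}\le \frac{F(\tilde q)-F(q_0)}{\tilde q-q_0},\qquad \hat\epsilon\le 1-F(q_0),\qquad P=\frac{c}{f\bigl(F^{-1}(1-\hat\epsilon)\bigr)},$$ then there exists an $\epsilon\le 1-F(q_0)$ satisfying $P=c/f\bigl(F^{-1}(1-\epsilon)\bigr)$, and an optimal solution of the problem above is $q_1^*:=F^{-1}(1-\epsilon)$. Otherwise, an optimal solution is $q_1^*:=q_0$.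
   Context: $D^*$ models the (unknown) minimum amount of training data needed to reach a target performance; $c$ is the per-sample collection cost, $P$ the penalty for failing to reach the target, and $q_0$ the initial data set size. $F^{-1}$ denotes the quantile function $F^{-1}(p)=\inf\{q : F(q)\ge p\}$. *)

theory Defs
  imports "HOL-Probability.Probability"
begin

definition quantile :: "(real \<Rightarrow> real) \<Rightarrow> real \<Rightarrow> real" where
  "quantile F p = Inf {q. F q \<ge> p}"

definition one_round_cost :: "real \<Rightarrow> real \<Rightarrow> real \<Rightarrow> (real \<Rightarrow> real) \<Rightarrow> real \<Rightarrow> real" where
  "one_round_cost c P q0 F q1 = c * (q1 - q0) + P * (1 - F q1)"

definition one_round_optimal :: "real \<Rightarrow> real \<Rightarrow> real \<Rightarrow> (real \<Rightarrow> real) \<Rightarrow> real \<Rightarrow> bool" where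
  "one_round_optimal c P q0 F q1 \<longleftrightarrow>
     q0 \<le> q1 \<and> (\<forall>q. q0 \<le> q \<longrightarrow> one_round_cost c P q0 F q1 \<le> one_round_cost c P q0 F q)"

end

theory Submission
  imports Defs
begin

text \<open>
  The cost \<open>c (q - q0) + P (1 - F q)\<close> is continuous and grows at least linearly in \<open>q\<close>,
  so it attains its minimum on \<open>[q0, \<infinity>)\<close>. The slope condition says precisely that some
  \<open>q\<^sub>t > q0\<close> costs no more than \<open>q0\<close>; then a minimiser can be taken in the interior, where
  Fermat's rule gives \<open>f q\<^sup>* = c / P\<close>, and \<open>\<epsilon> = 1 - F q\<^sup>*\<close> recovers \<open>q\<^sup>* = F\<^sup>-\<^sup>1 (1 - \<epsilon>)\<close>
  because the quantile function is a left inverse of a strictly increasing \<open>F\<close>.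
  If the slope condition fails for every \<open>q > q0\<close>, then \<open>q0\<close> beats every such \<open>q\<close>.
\<close>

lemma quantile_strict_mono_inverse:
  assumes "strict_mono (F :: real \<Rightarrow> real)"
  shows "quantile F (F q) = q"
proof -
  have "{x. F q \<le> F x} = {q..}"
    using assms by (auto simp: strict_mono_less_eq)
  then show ?thesis unfolding quantile_def by simp
qed

lemma continuous_attains_inf_atLeast:
  fixes g :: "real \<Rightarrow> real"
  assumes cont: "continuous_on {a..} g" and coercive: "\<And>x. b < x \<Longrightarrow> g a < g x"
  shows "\<exists>x\<ge>a. \<forall>y\<ge>a. g x \<le> g y"
proof -
  have "continuous_on {a..max a b} g"
    using cont by (rule continuous_on_subset) auto
  then obtain x where x: "x \<in> {a..max a b}" and min: "\<And>y. y \<in> {a..max a b} \<Longrightarrow> g x \<le> g y"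
    using continuous_attains_inf[OF compact_Icc, of a "max a b" g] by auto
  have "g x \<le> g y" if "a \<le> y" for y
  proof (cases "y \<le> max a b")
    case True
    then show ?thesis using min that by simp
  next
    case False
    then show ?thesis using min[of a] coercive[of y] by fastforce
  qed
  then show ?thesis using x by auto
qed

lemma one_round_cost_le_iff_slope:
  assumes "q > q0" and "P > 0"
  shows "one_round_cost c P q0 F q \<le> one_round_cost c P q0 F q0 \<longleftrightarrow>
    c / P \<le> (F q - F q0) / (q - q0)"
proof -
  have "one_round_cost c P q0 F q \<le> one_round_cost c P q0 F q0 \<longleftrightarrow>
      c * (q - q0) \<le> P * (F q - F q0)"
    unfolding one_round_cost_def by (simp add: algebra_simps)
  also have "\<dots> \<longleftrightarrow> c / P \<le> (F q - F q0) / (q - q0)"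
    using assms by (simp add: divide_simps mult.commute)
  finally show ?thesis .
qed

lemma one_round_optimal_exists:
  assumes "continuous_on UNIV F" and "\<And>q. F q \<le> 1" and "c > 0" and "P \<ge> 0"
  shows "\<exists>q. one_round_optimal c P q0 F q"
proof -
  let ?g = "one_round_cost c P q0 F"
  have "continuous_on {q0..} ?g"
    unfolding one_round_cost_def
    by (intro continuous_intros continuous_on_subset[OF assms(1)]) auto
  moreover have "?g q0 < ?g x" if "q0 + ?g q0 / c < x" for x
  proof -
    have "?g q0 < c * (x - q0)"
      using that \<open>c > 0\<close> by (simp add: field_simps)
    also have "\<dots> \<le> ?g x"
      using assms(2)[of x] \<open>P \<ge> 0\<close> unfolding one_round_cost_def by simp
    finally show ?thesis .
  qed
  ultimately show ?thesis
    unfolding one_round_optimal_def by (blast dest: continuous_attains_inf_atLeast)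
qed

lemma one_round_optimal_interior:
  assumes "one_round_optimal c P q0 F q"
    and "q\<^sub>t > q0" and "one_round_cost c P q0 F q\<^sub>t \<le> one_round_cost c P q0 F q0"
  shows "\<exists>q'>q0. one_round_optimal c P q0 F q'"
proof (cases "q > q0")
  case False
  then have "q = q0" using assms(1) unfolding one_round_optimal_def by simp
  then have "one_round_optimal c P q0 F q\<^sub>t"
    using assms unfolding one_round_optimal_def by force
  then show ?thesis using assms(2) by blast
qed (use assms in blast)

lemma one_round_optimal_first_order:
  assumes "one_round_optimal c P q0 F q" and "q > q0" and "P \<noteq> 0"
    and "(F has_real_derivative f q) (at q)"
  shows "f q = c / P"
proof -
  have "(one_round_cost c P q0 F has_real_derivative c - P * f q) (at q)"
    unfolding one_round_cost_def by (auto intro!: derivative_eq_intros assms(4))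
  moreover have "\<forall>y. \<bar>q - y\<bar> < q - q0 \<longrightarrow> one_round_cost c P q0 F q \<le> one_round_cost c P q0 F y"
    using assms(1) unfolding one_round_optimal_def by auto
  ultimately have "c - P * f q = 0"
    using \<open>q > q0\<close> by (intro DERIV_local_min) auto
  then show ?thesis using \<open>P \<noteq> 0\<close> by (simp add: field_simps)
qed

theorem theorem1:
  fixes M :: "'a measure" and D :: "'a \<Rightarrow> real"
    and F f :: "real \<Rightarrow> real" and c P q0 :: real
  assumes "prob_space M"
    and "distributed M lborel D (\<lambda>q. ennreal (f q))"
    and "F = cdf (distr M borel D)"
    and "\<And>q. (F has_real_derivative f q) (at q)"
    and "strict_mono F"
    and "continuous_on UNIV F"
    and "c > 0" and "P > 0" and "q0 \<ge> 0"
  shows "((\<exists>qt \<epsilon>h. qt > q0 \<and> \<epsilon>h \<ge> 0 \<and> c / P \<le> (F qt - F q0) / (qt - q0)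
              \<and> \<epsilon>h \<le> 1 - F q0 \<and> P = c / f (quantile F (1 - \<epsilon>h)))
           \<longrightarrow> (\<exists>\<epsilon>. \<epsilon> \<le> 1 - F q0 \<and> P = c / f (quantile F (1 - \<epsilon>))
                  \<and> one_round_optimal c P q0 F (quantile F (1 - \<epsilon>))))
       \<and> ((\<not> (\<exists>qt \<epsilon>h. qt > q0 \<and> \<epsilon>h \<ge> 0 \<and> c / P \<le> (F qt - F q0) / (qt - q0)
              \<and> \<epsilon>h \<le> 1 - F q0 \<and> P = c / f (quantile F (1 - \<epsilon>h))))
           \<longrightarrow> one_round_optimal c P q0 F q0)"
proof -
  interpret real_distribution "distr M borel D"
    using prob_space.real_distribution_distr[OF assms(1)] distributed_measurable[OF assms(2)] by simp
  have F_le_1: "\<And>q. F q \<le> 1" using cdf_bounded_prob assms(3) by simp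
  obtain q where q: "one_round_optimal c P q0 F q"
    using one_round_optimal_exists[OF assms(6) F_le_1 \<open>c > 0\<close>] \<open>P > 0\<close> by fastforce
  have interior_solution: "\<exists>\<epsilon>\<ge>0. \<epsilon> \<le> 1 - F q0 \<and> P = c / f (quantile F (1 - \<epsilon>))
                  \<and> one_round_optimal c P q0 F (quantile F (1 - \<epsilon>))"
    if slope: "q\<^sub>t > q0" "c / P \<le> (F q\<^sub>t - F q0) / (q\<^sub>t - q0)" for q\<^sub>t
  proof -
    obtain q' where q': "q' > q0" "one_round_optimal c P q0 F q'"
      using one_round_optimal_interior[OF q] one_round_cost_le_iff_slope slope \<open>P > 0\<close> by blast
    moreover have "f q' = c / P"
      using one_round_optimal_first_order[OF q'(2,1)] assms(4) \<open>P > 0\<close> by simp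
    moreover have "F q0 \<le> F q'" using \<open>q' > q0\<close> assms(5) by (simp add: strict_mono_less_eq)
    ultimately show ?thesis
      using quantile_strict_mono_inverse[OF assms(5), of q'] F_le_1[of q'] \<open>c > 0\<close>
      by (intro exI[of _ "1 - F q'"]) auto
  qed
  have "one_round_optimal c P q0 F q0"
    if "\<And>q\<^sub>t. q\<^sub>t > q0 \<Longrightarrow> \<not> c / P \<le> (F q\<^sub>t - F q0) / (q\<^sub>t - q0)"
    using that one_round_cost_le_iff_slope[OF _ \<open>P > 0\<close>] unfolding one_round_optimal_def
    by (metis linorder_not_le nle_le order_le_less)
  then show ?thesis using interior_solution by blast
qed

end
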